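(* Let $V=(J,(V_j)_{j\in J},d,H)$ be a hypergraph system, $(\nu_e)_{e\in H}$ a pseudorandom system of measures on $V$, and for each $e\in H$ let $f_e:V_e\to\mathbb{R}$ satisfy $|f_e(x_e)|\le\nu_e(x_e)$ for all $x_e\in V_e$. For $J'\subseteq J$ define $$Q_{J'}:=\mathbb{E}\Big(\prod_{e\in H:\,J'\subseteq e}\ \prod_{\omega\in\{0,1\}^{J'}}f_e(x^{(\omega)}_e)\prod_{e\in H:\,J'\not\subseteq e}\ \prod_{\omega\in\{0,1\}^{e\cap J'}}\nu_e(x^{(\omega)}_e)\ \Big|\ x^{(0)}_J,x^{(1)}_J\in V_J,\ x^{(0)}_{J\setminus J'}=x^{(1)}_{J\setminus J'}\Big),$$ where in $x^{(\omega)}_e$ the tuple $\omega$ (defined on $J'$ or on $e\cap J'$) is extended arbitrarily to $e$ (the choice is irrelevant since $x^{(0)}_{J\setminus J'}=x^{(1)}_{J\setminus J'}$). Then for every $J'\subsetneq J$ and every $j_0\in J\setminus J'$, $$|Q_{J'}|\le(1+o_{N\to\infty}(1))\,|Q_{J'\cup\{j_0\}}|^{1/2}.$$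
   Context: A hypergraph system is a quadruple $V=(J,(V_j)_{j\in J},d,H)$ where $J$ is a finite set, each $V_j$ is a finite nonempty set, $d\ge1$ is an integer and $H\subseteq\binom{J}{d}:=\{e\subseteq J:|e|=d\}$; for $e\subseteq J$ put $V_e:=\prod_{j\in e}V_j$. For a finite nonempty set $Z$ and $f:Z\to\mathbb{R}$, $\mathbb{E}(f(x)\mid x\in Z):=|Z|^{-1}\sum_{x\in Z}f(x)$; constraints written after the bar mean uniform averaging over all tuples satisfying them. All objects depend on a parameter $N$ ranging over a sequence tending to infinity while $J,d,H$ are fixed; implicit constants may depend on $J$; $o_{N\to\infty}(1)$ is a quantity tending to $0$ as $N\to\infty$ uniformly in the $f_e$; $O_K(1)$ is a quantity bounded by a constant depending on $K$ (and $J$). Cube notation: for a finite set $e$, $\{0,1\}^e$ is the set of tuples $\omega=(\omega_j)_{j\in e}$ with $\omega_j\in\{0,1\}$, and $0^e$ is the all-zero tuple; for $x^{(0)}_J=(x^{(0)}_j)_{j\in J},x^{(1)}_J\in V_J$, $e\subseteq J$ and $\omega\in\{0,1\}^e$, set $x^{(\omega)}_e:=(x^{(\omega_j)}_j)_{j\in e}\in V_e$ and $x^{(a)}_e:=(x^{(a)}_j)_{j\in e}$ for $a\in\{0,1\}$. A system of measures is a family of functions $\nu_e:V_e\to[0,\infty)$, $e\in H$, with $\mathbb{E}(\nu_e(x_e)\mid x_e\in V_e)=1+o_{N\to\infty}(1)$. For $e\in H$ and $f:V_e\to\mathbb{R}$, $\mathcal{D}_ef(x^{(0)}_e):=\mathbb{E}\big(\prod_{\omega\in\{0,1\}^e,\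 \omega\neq 0^e}f(x^{(\omega)}_e)\mid x^{(1)}_e\in V_e\big)$. The system is pseudorandom if: (i) $\mathcal{D}_e(\nu_e+1)(x_e)=O(1)$ for all $e\in H$, $x_e\in V_e$; (ii) for every choice of exponents $n_{e,\omega}\in\{0,1\}$, $\mathbb{E}\big(\prod_{e\in H}\prod_{\omega\in\{0,1\}^e}\nu_e(x^{(\omega)}_e)^{n_{e,\omega}}\mid x^{(0)}_J,x^{(1)}_J\in V_J\big)=1+o_{N\to\infty}(1)$; (iii) for every $e\in H$, $j\in e$, every choice of $n_{e,\omega}\in\{0,1\}$ and every integer $K\ge0$, $\mathbb{E}\Big(\mathbb{E}\big(\prod_{\omega\in\{0,1\}^e}\nu_e(x^{(\omega)}_e)^{n_{e,\omega}}\mid x^{(0)}_j,x^{(1)}_j\in V_j\big)^K\ \Big|\ x^{(0)}_{e\setminus\{j\}},x^{(1)}_{e\setminus\{j\}}\in V_{e\setminus\{j\}}\Big)=O_K(1)$. *)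

theory Defs
  imports "HOL-Analysis.Analysis"
begin

definition avg :: "'a set \<Rightarrow> ('a \<Rightarrow> real) \<Rightarrow> real" where
  "avg Z f = (\<Sum>x\<in>Z. f x) / real (card Z)"

text \<open>Points of V_e are functions on e (extensional, undefined outside e).\<close>
definition Vpts :: "('j \<Rightarrow> 'v set) \<Rightarrow> 'j set \<Rightarrow> ('j \<Rightarrow> 'v) set" where
  "Vpts V e = PiE e V"

text \<open>The cube {0,1}^e, with 0 encoded as False and 1 as True.\<close>
definition cube :: "'j set \<Rightarrow> ('j \<Rightarrow> bool) set" where
  "cube e = PiE e (\<lambda>_. UNIV)"

definition zero_vertex :: "'j set \<Rightarrow> ('j \<Rightarrow> bool)" where
  "zero_vertex e = restrict (\<lambda>_. False) e"

definition cpt :: "'j set \<Rightarrow> ('j \<Rightarrow> 'v) \<Rightarrow> ('j \<Rightarrow> 'v) \<Rightarrow> ('j \<Rightarrow> bool) \<Rightarrow> ('j \<Rightarrow> 'v)" where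
  "cpt e x0 x1 \<omega> = restrict (\<lambda>j. if \<omega> j then x1 j else x0 j) e"

definition hypergraph_system ::
  "'j set \<Rightarrow> (nat \<Rightarrow> 'j \<Rightarrow> 'v set) \<Rightarrow> nat \<Rightarrow> 'j set set \<Rightarrow> bool" where
  "hypergraph_system J V d H \<longleftrightarrow> finite J \<and> d \<ge> 1 \<and>
     (\<forall>N. \<forall>j\<in>J. finite (V N j) \<and> V N j \<noteq> {}) \<and>
     H \<subseteq> {e. e \<subseteq> J \<and> card e = d}"

definition Dop :: "('j \<Rightarrow> 'v set) \<Rightarrow> 'j set \<Rightarrow> (('j \<Rightarrow> 'v) \<Rightarrow> real) \<Rightarrow> ('j \<Rightarrow> 'v) \<Rightarrow> real" where
  "Dop V e f x0 = avg (Vpts V e)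
     (\<lambda>x1. \<Prod>\<omega>\<in>cube e - {zero_vertex e}. f (cpt e x0 x1 \<omega>))"

definition system_of_measures ::
  "'j set \<Rightarrow> (nat \<Rightarrow> 'j \<Rightarrow> 'v set) \<Rightarrow> 'j set set \<Rightarrow> (nat \<Rightarrow> 'j set \<Rightarrow> ('j \<Rightarrow> 'v) \<Rightarrow> real) \<Rightarrow> bool" where
  "system_of_measures J V H \<nu> \<longleftrightarrow>
     (\<forall>N. \<forall>e\<in>H. \<forall>x\<in>Vpts (V N) e. \<nu> N e x \<ge> 0) \<and>
     (\<forall>e\<in>H. (\<lambda>N. avg (Vpts (V N) e) (\<nu> N e)) \<longlonglongrightarrow> 1)"

text \<open>Pseudorandomness conditions (i)--(iii); O(1) means bounded for all sufficiently large N.\<close>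
definition pseudorandom ::
  "'j set \<Rightarrow> (nat \<Rightarrow> 'j \<Rightarrow> 'v set) \<Rightarrow> 'j set set \<Rightarrow> (nat \<Rightarrow> 'j set \<Rightarrow> ('j \<Rightarrow> 'v) \<Rightarrow> real) \<Rightarrow> bool" where
  "pseudorandom J V H \<nu> \<longleftrightarrow>
     system_of_measures J V H \<nu> \<and>
     (\<exists>C. \<forall>\<^sub>F N in sequentially. \<forall>e\<in>H. \<forall>x\<in>Vpts (V N) e.
         \<bar>Dop (V N) e (\<lambda>y. \<nu> N e y + 1) x\<bar> \<le> C) \<and>
     (\<forall>n :: 'j set \<Rightarrow> ('j \<Rightarrow> bool) \<Rightarrow> bool.
        (\<lambda>N. avg (Vpts (V N) J \<times> Vpts (V N) J)
           (\<lambda>(x0, x1). \<Prod>e\<in>H. \<Prod>\<omega>\<in>cube e.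
               if n e \<omega> then \<nu> N e (cpt e x0 x1 \<omega>) else 1)) \<longlonglongrightarrow> 1) \<and>
     (\<forall>e\<in>H. \<forall>j\<in>e. \<forall>n :: ('j \<Rightarrow> bool) \<Rightarrow> bool. \<forall>K::nat.
        \<exists>C. \<forall>\<^sub>F N in sequentially.
          \<bar>avg (Vpts (V N) (e - {j}) \<times> Vpts (V N) (e - {j}))
             (\<lambda>(y0, y1). (avg (V N j \<times> V N j)
                (\<lambda>(a, b). \<Prod>\<omega>\<in>cube e.
                   if n \<omega> then \<nu> N e (cpt e (y0(j := a)) (y1(j := b)) \<omega>) else 1)) ^ K)\<bar> \<le> C)"

definition Q ::
  "'j set \<Rightarrow> ('j \<Rightarrow> 'v set) \<Rightarrow> 'j set set \<Rightarrow> ('j set \<Rightarrow> ('j \<Rightarrow> 'v) \<Rightarrow> real)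
     \<Rightarrow> ('j set \<Rightarrow> ('j \<Rightarrow> 'v) \<Rightarrow> real) \<Rightarrow> 'j set \<Rightarrow> real" where
  "Q J V H \<nu> f J' = avg {(x0, x1). x0 \<in> Vpts V J \<and> x1 \<in> Vpts V J \<and> (\<forall>j\<in>J - J'. x0 j = x1 j)}
     (\<lambda>(x0, x1).
        (\<Prod>e\<in>{e\<in>H. J' \<subseteq> e}. \<Prod>\<omega>\<in>cube J'. f e (cpt e x0 x1 \<omega>)) *
        (\<Prod>e\<in>{e\<in>H. \<not> J' \<subseteq> e}. \<Prod>\<omega>\<in>cube (e \<inter> J'). \<nu> e (cpt e x0 x1 \<omega>)))"

end

theory Submission
  imports Defs
begin

text \<open>
  In \<open>Q_{J'}\<close> both copies share the value \<open>y\<close> of \<open>x_{j0}\<close>,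
  and the integrand factors as \<open>A(u) B(u, y)\<close>, where \<open>u\<close> are the remaining coordinates,
  \<open>A\<close> collects the edges avoiding \<open>j0\<close> and \<open>B\<close> those containing it; hence
  \<open>Q_{J'} = E_u A(u) s(u)\<close> with \<open>s(u) = E_y B(u, y)\<close>. In \<open>Q_{J' \<union> {j0}}\<close> the two copies
  of \<open>x_{j0}\<close> are independent, the edges containing \<open>j0\<close> are doubled and those avoiding it
  only see \<open>\<nu>\<close>, so \<open>Q_{J' \<union> {j0}} = E_u W(u) s(u)\<^sup>2\<close> with \<open>|A| \<le> W\<close>.
  Cauchy-Schwarz gives \<open>|Q_{J'}| \<le> sqrt (E_u W) sqrt |Q_{J' \<union> {j0}}|\<close>, and \<open>E_u W\<close> is one
  of the averages of products of \<open>\<nu>\<close> that pseudorandomness condition (ii) sends to 1.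
\<close>

lemma avg_reindex_bij:
  assumes "bij_betw g A B"
  shows "avg B f = avg A (\<lambda>x. f (g x))"
  using sum.reindex_bij_betw[OF assms, of f] bij_betw_same_card[OF assms]
  by (simp add: avg_def)

lemma avg_cong: "(\<And>x. x \<in> A \<Longrightarrow> f x = g x) \<Longrightarrow> avg A f = avg A g"
  by (simp add: avg_def)

lemma avg_Times: "avg (A \<times> B) f = avg A (\<lambda>a. avg B (\<lambda>b. f (a, b)))"
proof (cases "finite (A \<times> B)")
  case True
  then consider "A = {}" | "B = {}" | "finite A" "finite B"
    by (auto simp: finite_cartesian_product_iff)
  then show ?thesis
    by cases (auto simp: avg_def sum.cartesian_product card_cartesian_product
        sum_divide_distrib[symmetric] divide_divide_eq_left mult.commute)
next
  case False
  then have "A \<noteq> {}" "B \<noteq> {}" "infinite A \<or> infinite B"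
    by (auto simp: finite_cartesian_product_iff)
  then show ?thesis
    using False by (auto simp: avg_def)
qed

lemma avg_const: "finite A \<Longrightarrow> A \<noteq> {} \<Longrightarrow> avg A (\<lambda>_. c) = c"
  by (simp add: avg_def)

lemma avg_mult_left: "avg A (\<lambda>x. c * f x) = c * avg A f"
  by (simp add: avg_def sum_distrib_left)

lemma avg_mult_right: "avg A (\<lambda>x. f x * c) = avg A f * c"
  by (simp add: avg_def sum_distrib_right)

lemma avg_Times_self_mult: "avg (A \<times> A) (\<lambda>(a, b). f a * f b) = (avg A f)\<^sup>2"
  by (simp add: avg_Times avg_mult_left avg_mult_right power2_eq_square)

lemma avg_nonneg: "(\<And>x. x \<in> A \<Longrightarrow> 0 \<le> f x) \<Longrightarrow> 0 \<le> avg A f"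
  by (simp add: avg_def sum_nonneg)

lemma sum_weighted_Cauchy_Schwarz:
  fixes a w s :: "'u \<Rightarrow> real"
  assumes "\<And>u. u \<in> U \<Longrightarrow> \<bar>a u\<bar> \<le> w u"
  shows "(\<Sum>u\<in>U. a u * s u)\<^sup>2 \<le> (\<Sum>u\<in>U. w u) * (\<Sum>u\<in>U. w u * (s u)\<^sup>2)"
proof -
  have w_nonneg: "u \<in> U \<Longrightarrow> 0 \<le> w u" for u
    using assms[of u] by linarith
  have "\<bar>\<Sum>u\<in>U. a u * s u\<bar> \<le> (\<Sum>u\<in>U. sqrt (w u) * (sqrt (w u) * \<bar>s u\<bar>))"
    using sum_abs[of "\<lambda>u. a u * s u" U]
      sum_mono[of U "\<lambda>u. \<bar>a u * s u\<bar>" "\<lambda>u. sqrt (w u) * (sqrt (w u) * \<bar>s u\<bar>)"]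
      assms w_nonneg by (simp add: abs_mult mult_right_mono flip: mult.assoc)
  then have "(\<Sum>u\<in>U. a u * s u)\<^sup>2 \<le> (\<Sum>u\<in>U. sqrt (w u) * (sqrt (w u) * \<bar>s u\<bar>))\<^sup>2"
    by (metis abs_ge_zero power2_abs power_mono)
  also have "\<dots> \<le> (\<Sum>u\<in>U. (sqrt (w u))\<^sup>2) * (\<Sum>u\<in>U. (sqrt (w u) * \<bar>s u\<bar>)\<^sup>2)"
    by (rule Cauchy_Schwarz_ineq_sum)
  also have "\<dots> = (\<Sum>u\<in>U. w u) * (\<Sum>u\<in>U. w u * (s u)\<^sup>2)"
    using w_nonneg by (simp add: power_mult_distrib)
  finally show ?thesis .
qed

lemma avg_weighted_Cauchy_Schwarz:
  fixes a w s :: "'u \<Rightarrow> real"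
  assumes "\<And>u. u \<in> U \<Longrightarrow> \<bar>a u\<bar> \<le> w u"
  shows "\<bar>avg U (\<lambda>u. a u * s u)\<bar> \<le> sqrt (avg U w) * sqrt (avg U (\<lambda>u. w u * (s u)\<^sup>2))"
proof -
  have "(avg U (\<lambda>u. a u * s u))\<^sup>2 = (\<Sum>u\<in>U. a u * s u)\<^sup>2 / (real (card U))\<^sup>2"
    by (simp add: avg_def power_divide)
  also have "\<dots> \<le> (\<Sum>u\<in>U. w u) * (\<Sum>u\<in>U. w u * (s u)\<^sup>2) / (real (card U))\<^sup>2"
    using assms by (intro divide_right_mono sum_weighted_Cauchy_Schwarz) auto
  also have "\<dots> = avg U w * avg U (\<lambda>u. w u * (s u)\<^sup>2)"
    by (simp add: avg_def power2_eq_square)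
  finally show ?thesis
    by (metis power2_abs real_le_rsqrt real_sqrt_mult)
qed

lemma prod_filter_split:
  "finite A \<Longrightarrow> prod g A = prod g {x\<in>A. \<not> P x} * prod g {x\<in>A. P x}"
  by (subst prod.union_disjoint[symmetric]) (auto intro: prod.cong)

lemma finite_cube: "finite K \<Longrightarrow> finite (cube K)"
  unfolding cube_def by (simp add: finite_PiE)

lemma prod_cube_insert:
  assumes "a \<notin> K" "finite K"
  shows "(\<Prod>w\<in>cube (insert a K). g w) = (\<Prod>w\<in>cube K. g (w(a := False)) * g (w(a := True)))"
proof -
  have "(\<Prod>w\<in>cube (insert a K). g w) = (\<Prod>(b, w)\<in>UNIV \<times> cube K. g (w(a := b)))"
    unfolding cube_def PiE_insert_eq
    by (subst prod.reindex)
      (use inj_combinator[OF assms(1), of "\<lambda>_. UNIV"] in \<open>auto simp: case_prod_beta\<close>)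
  also have "\<dots> = (\<Prod>w\<in>cube K. g (w(a := False))) * (\<Prod>w\<in>cube K. g (w(a := True)))"
    by (simp add: prod.cartesian_product[symmetric] UNIV_bool)
  finally show ?thesis
    by (simp add: prod.distrib)
qed

lemma prod_cube_vanishing_outside:
  assumes "L \<subseteq> e" "finite e"
  shows "(\<Prod>w\<in>cube e. if \<forall>i\<in>e - L. \<not> w i then g w else 1)
    = (\<Prod>w\<in>cube L. g (restrict (\<lambda>i. i \<in> L \<and> w i) e))"
proof -
  have bij: "bij_betw (\<lambda>w. restrict (\<lambda>i. i \<in> L \<and> w i) e) (cube L) {w\<in>cube e. \<forall>i\<in>e - L. \<not> w i}"
    by (rule bij_betw_byWitness[where f' = "\<lambda>w. restrict w L"])
      (use assms(1) in \<open>auto simp: cube_def PiE_def extensional_def fun_eq_iff\<close>)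
  have "(\<Prod>w\<in>cube e. if \<forall>i\<in>e - L. \<not> w i then g w else 1) = (\<Prod>w\<in>{w\<in>cube e. \<forall>i\<in>e - L. \<not> w i}. g w)"
    using assms(2) by (simp add: prod.inter_filter finite_cube)
  also have "\<dots> = (\<Prod>w\<in>cube L. g (restrict (\<lambda>i. i \<in> L \<and> w i) e))"
    by (rule prod.reindex_bij_betw[OF bij, symmetric])
  finally show ?thesis .
qed

lemma cpt_in_Vpts: "e \<subseteq> J \<Longrightarrow> x0 \<in> Vpts V J \<Longrightarrow> x1 \<in> Vpts V J \<Longrightarrow> cpt e x0 x1 w \<in> Vpts V e"
  unfolding cpt_def Vpts_def by (auto simp: PiE_iff)

lemma cpt_fun_upd_notin: "j \<notin> e \<Longrightarrow> cpt e (x0(j := a)) (x1(j := b)) w = cpt e x0 x1 w"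
  unfolding cpt_def by (auto intro!: ext)

lemma cpt_fun_upd_False:
  "cpt e (x0(j := y0)) (x1(j := y1)) (w(j := False)) = cpt e (x0(j := y0)) (x1(j := y0)) w"
  unfolding cpt_def by (auto intro!: ext)

lemma cpt_fun_upd_True:
  "cpt e (x0(j := y0)) (x1(j := y1)) (w(j := True)) = cpt e (x0(j := y1)) (x1(j := y1)) w"
  unfolding cpt_def by (auto intro!: ext)

definition pairs_agreeing_outside ::
  "('j \<Rightarrow> 'v set) \<Rightarrow> 'j set \<Rightarrow> 'j set \<Rightarrow> (('j \<Rightarrow> 'v) \<times> ('j \<Rightarrow> 'v)) set" where
  "pairs_agreeing_outside V J K =
    {(x0, x1). x0 \<in> Vpts V J \<and> x1 \<in> Vpts V J \<and> (\<forall>j\<in>J - K. x0 j = x1 j)}"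

lemma pairs_agreeing_outsideD:
  assumes "(x0, x1) \<in> pairs_agreeing_outside V J K" "j \<in> J"
  shows "x0 j \<in> V j" "x1 j \<in> V j" "j \<notin> K \<Longrightarrow> x0 j = x1 j"
  using assms by (auto simp: pairs_agreeing_outside_def Vpts_def)

lemma fun_upd_in_pairs_agreeing_outside:
  assumes "(x0, x1) \<in> pairs_agreeing_outside V J L" "j \<in> J" "y0 \<in> V j" "y1 \<in> V j"
    and "L \<subseteq> insert j K" "j \<notin> K \<Longrightarrow> y0 = y1"
  shows "(x0(j := y0), x1(j := y1)) \<in> pairs_agreeing_outside V J K"
  using assms by (auto simp: pairs_agreeing_outside_def Vpts_def PiE_fun_upd insert_absorb)

lemma avg_pairs_agreeing_outside_split:
  assumes "j \<in> J" "j \<notin> K" "c \<in> V j"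
  shows "avg (pairs_agreeing_outside V J K) F
    = avg {(x0, x1) \<in> pairs_agreeing_outside V J K. x0 j = c \<and> x1 j = c}
        (\<lambda>(x0, x1). avg (V j) (\<lambda>y. F (x0(j := y), x1(j := y))))"
proof -
  let ?U = "{(x0, x1) \<in> pairs_agreeing_outside V J K. x0 j = c \<and> x1 j = c}"
  have "bij_betw (\<lambda>((x0, x1), y). (x0(j := y), x1(j := y))) (?U \<times> V j)
      (pairs_agreeing_outside V J K)"
  proof (rule bij_betw_byWitness[where f' = "\<lambda>(x0, x1). ((x0(j := c), x1(j := c)), x0 j)"])
    show "(\<lambda>((x0, x1), y). (x0(j := y), x1(j := y))) ` (?U \<times> V j) \<subseteq> pairs_agreeing_outside V J K"
      using assms by (auto intro: fun_upd_in_pairs_agreeing_outside)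
    show "(\<lambda>(x0, x1). ((x0(j := c), x1(j := c)), x0 j)) ` pairs_agreeing_outside V J K \<subseteq> ?U \<times> V j"
      using assms by (auto intro: fun_upd_in_pairs_agreeing_outside dest: pairs_agreeing_outsideD)
  qed (use assms in \<open>auto simp: fun_eq_iff dest: pairs_agreeing_outsideD\<close>)
  then show ?thesis
    by (simp add: avg_reindex_bij avg_Times split_def)
qed

lemma avg_pairs_agreeing_outside_insert_split:
  assumes "j \<in> J" "j \<notin> K" "c \<in> V j"
  shows "avg (pairs_agreeing_outside V J (insert j K)) F
    = avg {(x0, x1) \<in> pairs_agreeing_outside V J K. x0 j = c \<and> x1 j = c}
        (\<lambda>(x0, x1). avg (V j \<times> V j) (\<lambda>(y0, y1). F (x0(j := y0), x1(j := y1))))"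
proof -
  let ?U = "{(x0, x1) \<in> pairs_agreeing_outside V J K. x0 j = c \<and> x1 j = c}"
  have "bij_betw (\<lambda>((x0, x1), (y0, y1)). (x0(j := y0), x1(j := y1))) (?U \<times> (V j \<times> V j))
      (pairs_agreeing_outside V J (insert j K))"
  proof (rule bij_betw_byWitness[where f' = "\<lambda>(x0, x1). ((x0(j := c), x1(j := c)), (x0 j, x1 j))"])
    show "(\<lambda>((x0, x1), (y0, y1)). (x0(j := y0), x1(j := y1))) ` (?U \<times> (V j \<times> V j))
        \<subseteq> pairs_agreeing_outside V J (insert j K)"
      using assms by (auto intro: fun_upd_in_pairs_agreeing_outside)
    show "(\<lambda>(x0, x1). ((x0(j := c), x1(j := c)), (x0 j, x1 j)))
        ` pairs_agreeing_outside V J (insert j K) \<subseteq> ?U \<times> (V j \<times> V j)"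
      using assms by (auto intro: fun_upd_in_pairs_agreeing_outside dest: pairs_agreeing_outsideD)
  qed (auto simp: fun_eq_iff)
  then show ?thesis
    by (simp add: avg_reindex_bij avg_Times split_def)
qed

lemma avg_pairs_agreeing_outside_merge:
  assumes "K \<subseteq> J" "finite J" "\<And>j. j \<in> J \<Longrightarrow> finite (V j)" "\<And>j. j \<in> J \<Longrightarrow> V j \<noteq> {}"
  shows "avg (Vpts V J \<times> Vpts V J) (\<lambda>(x0, x1). F (x0, \<lambda>j. if j \<in> K then x1 j else x0 j))
    = avg (pairs_agreeing_outside V J K) F"
proof -
  let ?S = "pairs_agreeing_outside V J K" and ?T = "PiE (J - K) V"
  let ?G = "\<lambda>(x0, x1). F (x0, \<lambda>j. if j \<in> K then x1 j else x0 j)"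
  let ?join = "\<lambda>((x0, x1), z). (x0, \<lambda>j. if j \<in> K then x1 j else z j)"
  let ?split = "\<lambda>(x0, x1). ((x0, \<lambda>j. if j \<in> K then x1 j else x0 j), restrict x1 (J - K))"
  have "bij_betw ?join (?S \<times> ?T) (Vpts V J \<times> Vpts V J)"
  proof (rule bij_betw_byWitness[where f' = ?split])
    show "\<forall>a\<in>?S \<times> ?T. ?split (?join a) = a"
      using assms(1)
      by (auto simp: pairs_agreeing_outside_def Vpts_def PiE_def extensional_def fun_eq_iff)
        (metis DiffI)
    show "\<forall>a\<in>Vpts V J \<times> Vpts V J. ?join (?split a) = a"
      using assms(1) by (auto simp: Vpts_def PiE_def extensional_def fun_eq_iff)
    show "?join ` (?S \<times> ?T) \<subseteq> Vpts V J \<times> Vpts V J" "?split ` (Vpts V J \<times> Vpts V J) \<subseteq> ?S \<times> ?T"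
      using assms(1)
      by (auto simp: pairs_agreeing_outside_def Vpts_def PiE_def extensional_def Pi_def)
  qed
  then have "avg (Vpts V J \<times> Vpts V J) ?G = avg (?S \<times> ?T) (\<lambda>p. ?G (?join p))"
    by (rule avg_reindex_bij)
  also have "\<dots> = avg ?S (\<lambda>u. avg ?T (\<lambda>z. ?G (?join (u, z))))"
    by (rule avg_Times)
  also have "\<dots> = avg ?S (\<lambda>u. avg ?T (\<lambda>_. F u))"
  proof (rule avg_cong)
    fix u assume "u \<in> ?S"
    moreover obtain x0 x1 where u: "u = (x0, x1)"
      by fastforce
    ultimately have "(\<lambda>j. if j \<in> K then x1 j else x0 j) = x1"
      by (auto simp: pairs_agreeing_outside_def Vpts_def PiE_def extensional_def fun_eq_iff)
        (metis DiffI)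
    then show "avg ?T (\<lambda>z. ?G (?join (u, z))) = avg ?T (\<lambda>_. F u)"
      by (simp add: u cong: if_cong)
  qed
  also have "\<dots> = avg ?S F"
  proof -
    have "finite ?T" "?T \<noteq> {}"
      using assms by (auto intro: finite_PiE simp: PiE_eq_empty_iff)
    then show ?thesis
      by (simp add: avg_const)
  qed
  finally show ?thesis .
qed

definition edge_factor ::
  "('j set \<Rightarrow> ('j \<Rightarrow> 'v) \<Rightarrow> real) \<Rightarrow> ('j set \<Rightarrow> ('j \<Rightarrow> 'v) \<Rightarrow> real) \<Rightarrow> 'j set \<Rightarrow> 'j set
     \<Rightarrow> ('j \<Rightarrow> 'v) \<Rightarrow> ('j \<Rightarrow> 'v) \<Rightarrow> real" where
  "edge_factor \<nu> f K e x0 x1 = (\<Prod>w\<in>cube (e \<inter> K). (if K \<subseteq> e then f e else \<nu> e) (cpt e x0 x1 w))"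

lemma Q_eq_avg_prod_edge_factor:
  assumes "finite H"
  shows "Q J V H \<nu> f K
    = avg (pairs_agreeing_outside V J K) (\<lambda>(x0, x1). \<Prod>e\<in>H. edge_factor \<nu> f K e x0 x1)"
proof -
  have "(\<Prod>e\<in>H. edge_factor \<nu> f K e x0 x1)
      = (\<Prod>e\<in>{e\<in>H. K \<subseteq> e}. \<Prod>w\<in>cube K. f e (cpt e x0 x1 w)) *
        (\<Prod>e\<in>{e\<in>H. \<not> K \<subseteq> e}. \<Prod>w\<in>cube (e \<inter> K). \<nu> e (cpt e x0 x1 w))" for x0 x1
  proof -
    have "(\<Prod>e\<in>{e\<in>H. K \<subseteq> e}. edge_factor \<nu> f K e x0 x1)
        = (\<Prod>e\<in>{e\<in>H. K \<subseteq> e}. \<Prod>w\<in>cube K. f e (cpt e x0 x1 w))"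
      by (rule prod.cong) (auto simp: edge_factor_def Int_absorb1)
    moreover have "(\<Prod>e\<in>{e\<in>H. \<not> K \<subseteq> e}. edge_factor \<nu> f K e x0 x1)
        = (\<Prod>e\<in>{e\<in>H. \<not> K \<subseteq> e}. \<Prod>w\<in>cube (e \<inter> K). \<nu> e (cpt e x0 x1 w))"
      by (rule prod.cong) (auto simp: edge_factor_def)
    ultimately show ?thesis
      using prod_filter_split[OF assms, of "\<lambda>e. edge_factor \<nu> f K e x0 x1" "\<lambda>e. K \<subseteq> e"]
      by (simp add: mult.commute)
  qed
  then show ?thesis
    by (simp add: Q_def pairs_agreeing_outside_def)
qed

lemma edge_factor_fun_upd_notin:
  "j \<notin> e \<Longrightarrow> edge_factor \<nu> f K e (x0(j := a)) (x1(j := b)) = edge_factor \<nu> f K e x0 x1"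
  by (simp add: edge_factor_def cpt_fun_upd_notin)

lemma edge_factor_insert_notin:
  "j \<notin> e \<Longrightarrow> edge_factor \<nu> f (insert j K) e x0 x1 = edge_factor \<nu> \<nu> K e x0 x1"
  by (simp add: edge_factor_def)

lemma edge_factor_insert_doubling:
  assumes "j \<in> e" "j \<notin> K" "finite K"
  shows "edge_factor \<nu> f (insert j K) e (x0(j := y0)) (x1(j := y1))
    = edge_factor \<nu> f K e (x0(j := y0)) (x1(j := y0)) *
      edge_factor \<nu> f K e (x0(j := y1)) (x1(j := y1))"
proof -
  have "e \<inter> insert j K = insert j (e \<inter> K)" "(insert j K \<subseteq> e) = (K \<subseteq> e)"
    "j \<notin> e \<inter> K" "finite (e \<inter> K)"
    using assms by auto
  then show ?thesis
    by (simp add: edge_factor_def prod_cube_insert cpt_fun_upd_False cpt_fun_upd_True prod.distrib)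
qed

lemma abs_edge_factor_le:
  assumes "e \<subseteq> J" "x0 \<in> Vpts V J" "x1 \<in> Vpts V J"
    and "\<And>x. x \<in> Vpts V e \<Longrightarrow> \<bar>f e x\<bar> \<le> \<nu> e x"
  shows "\<bar>edge_factor \<nu> f K e x0 x1\<bar> \<le> edge_factor \<nu> \<nu> K e x0 x1"
proof -
  have "\<bar>(if K \<subseteq> e then f e else \<nu> e) x\<bar> \<le> \<nu> e x \<and> 0 \<le> \<nu> e x" if "x \<in> Vpts V e" for x
    using assms(4)[OF that] by auto
  then show ?thesis
    unfolding edge_factor_def abs_prod using cpt_in_Vpts[OF assms(1-3)]
    by (auto intro!: prod_mono)
qed

lemma abs_prod_edge_factor_le:
  assumes "\<And>e. e \<in> E \<Longrightarrow> e \<subseteq> J" "x0 \<in> Vpts V J" "x1 \<in> Vpts V J"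
    and "\<And>e x. e \<in> E \<Longrightarrow> x \<in> Vpts V e \<Longrightarrow> \<bar>f e x\<bar> \<le> \<nu> e x"
  shows "\<bar>\<Prod>e\<in>E. edge_factor \<nu> f K e x0 x1\<bar> \<le> (\<Prod>e\<in>E. edge_factor \<nu> \<nu> K e x0 x1)"
proof -
  have "\<bar>edge_factor \<nu> f K e x0 x1\<bar> \<le> edge_factor \<nu> \<nu> K e x0 x1" if "e \<in> E" for e
    using assms(1)[OF that] assms(2,3) assms(4)[OF that] by (rule abs_edge_factor_le)
  then show ?thesis
    unfolding abs_prod by (intro prod_mono) auto
qed

lemma prod_edge_factor_fun_upd:
  assumes "finite H"
  shows "(\<Prod>e\<in>H. edge_factor \<nu> f K e (x0(j := y)) (x1(j := y)))
    = (\<Prod>e\<in>{e\<in>H. j \<notin> e}. edge_factor \<nu> f K e x0 x1) *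
      (\<Prod>e\<in>{e\<in>H. j \<in> e}. edge_factor \<nu> f K e (x0(j := y)) (x1(j := y)))"
proof -
  have "(\<Prod>e\<in>{e\<in>H. j \<notin> e}. edge_factor \<nu> f K e (x0(j := y)) (x1(j := y)))
      = (\<Prod>e\<in>{e\<in>H. j \<notin> e}. edge_factor \<nu> f K e x0 x1)"
    by (rule prod.cong) (auto simp: edge_factor_fun_upd_notin)
  then show ?thesis
    by (simp add: prod_filter_split[OF assms, of _ "\<lambda>e. j \<in> e"])
qed

definition avoiding_weight ::
  "'j set set \<Rightarrow> ('j set \<Rightarrow> ('j \<Rightarrow> 'v) \<Rightarrow> real) \<Rightarrow> 'j set \<Rightarrow> 'j \<Rightarrow> ('j \<Rightarrow> 'v) \<Rightarrow> ('j \<Rightarrow> 'v) \<Rightarrow> real"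
  where "avoiding_weight H \<nu> K j x0 x1 = (\<Prod>e\<in>{e\<in>H. j \<notin> e}. edge_factor \<nu> \<nu> K e x0 x1)"

lemma prod_edge_factor_insert_fun_upd:
  assumes "finite H" "j \<notin> K" "finite K"
  shows "(\<Prod>e\<in>H. edge_factor \<nu> f (insert j K) e (x0(j := y0)) (x1(j := y1)))
    = avoiding_weight H \<nu> K j x0 x1 *
      ((\<Prod>e\<in>{e\<in>H. j \<in> e}. edge_factor \<nu> f K e (x0(j := y0)) (x1(j := y0))) *
       (\<Prod>e\<in>{e\<in>H. j \<in> e}. edge_factor \<nu> f K e (x0(j := y1)) (x1(j := y1))))"
proof -
  have "(\<Prod>e\<in>{e\<in>H. j \<notin> e}. edge_factor \<nu> f (insert j K) e (x0(j := y0)) (x1(j := y1)))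
      = (\<Prod>e\<in>{e\<in>H. j \<notin> e}. edge_factor \<nu> \<nu> K e x0 x1)"
    by (rule prod.cong) (auto simp: edge_factor_insert_notin edge_factor_fun_upd_notin)
  moreover have "(\<Prod>e\<in>{e\<in>H. j \<in> e}. edge_factor \<nu> f (insert j K) e (x0(j := y0)) (x1(j := y1)))
      = (\<Prod>e\<in>{e\<in>H. j \<in> e}. edge_factor \<nu> f K e (x0(j := y0)) (x1(j := y0)) *
           edge_factor \<nu> f K e (x0(j := y1)) (x1(j := y1)))"
    by (rule prod.cong) (auto simp: edge_factor_insert_doubling assms(2,3))
  ultimately show ?thesis
    by (simp add: avoiding_weight_def prod_filter_split[OF assms(1), of _ "\<lambda>e. j \<in> e"] prod.distrib)
qed

locale finite_hypergraph =
  fixes J :: "'j set" and V :: "'j \<Rightarrow> 'v set" and H :: "'j set set"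
  assumes finite_J: "finite J"
    and edge_subset: "e \<in> H \<Longrightarrow> e \<subseteq> J"
    and finite_V: "j \<in> J \<Longrightarrow> finite (V j)"
    and V_nonempty: "j \<in> J \<Longrightarrow> V j \<noteq> {}"
begin

lemma finite_H: "finite H"
  using finite_J edge_subset by (meson PowI finite_Pow_iff finite_subset subsetI)

lemma abs_Q_le_sqrt_avg_weight:
  fixes \<nu> f :: "'j set \<Rightarrow> ('j \<Rightarrow> 'v) \<Rightarrow> real"
  assumes "K \<subseteq> J" "j \<in> J" "j \<notin> K"
    and f_le: "\<And>e x. e \<in> H \<Longrightarrow> x \<in> Vpts V e \<Longrightarrow> \<bar>f e x\<bar> \<le> \<nu> e x"
  shows "\<bar>Q J V H \<nu> f K\<bar>
    \<le> sqrt (avg (pairs_agreeing_outside V J K) (\<lambda>(x0, x1). avoiding_weight H \<nu> K j x0 x1))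
      * sqrt \<bar>Q J V H \<nu> f (insert j K)\<bar>"
proof -
  obtain c where c: "c \<in> V j"
    using V_nonempty assms(2) by blast
  have finite_K: "finite K"
    using assms(1) finite_J by (rule finite_subset)
  define U where "U = {(x0, x1) \<in> pairs_agreeing_outside V J K. x0 j = c \<and> x1 j = c}"
  define A where "A = (\<lambda>(x0, x1). \<Prod>e\<in>{e\<in>H. j \<notin> e}. edge_factor \<nu> f K e x0 x1)"
  define W where "W = (\<lambda>(x0, x1). avoiding_weight H \<nu> K j x0 x1)"
  define B where "B = (\<lambda>(x0, x1) y. \<Prod>e\<in>{e\<in>H. j \<in> e}. edge_factor \<nu> f K e (x0(j := y)) (x1(j := y)))"
  define s where "s u = avg (V j) (B u)" for u
  have Q_K: "Q J V H \<nu> f K = avg U (\<lambda>u. A u * s u)"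
    by (simp add: Q_eq_avg_prod_edge_factor[OF finite_H]
        avg_pairs_agreeing_outside_split[where V = V, OF assms(2,3) c]
        prod_edge_factor_fun_upd[OF finite_H] avg_mult_left U_def A_def B_def s_def split_def)
  have "Q J V H \<nu> f (insert j K)
      = avg U (\<lambda>u. W u * avg (V j \<times> V j) (\<lambda>(y0, y1). B u y0 * B u y1))"
    by (simp add: Q_eq_avg_prod_edge_factor[OF finite_H]
        avg_pairs_agreeing_outside_insert_split[where V = V, OF assms(2,3) c]
        prod_edge_factor_insert_fun_upd[OF finite_H assms(3) finite_K]
        avg_mult_left U_def W_def B_def split_def)
  then have Q_insert: "Q J V H \<nu> f (insert j K) = avg U (\<lambda>u. W u * (s u)\<^sup>2)"
    by (simp add: avg_Times_self_mult s_def)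
  have W_avg: "avg (pairs_agreeing_outside V J K) W = avg U W"
    using finite_V[OF assms(2)] V_nonempty[OF assms(2)]
    by (simp add: avg_pairs_agreeing_outside_split[where V = V, OF assms(2,3) c]
        W_def U_def split_def avoiding_weight_def edge_factor_fun_upd_notin avg_const)
  have A_le_W: "\<bar>A u\<bar> \<le> W u" if "u \<in> U" for u
    using that edge_subset f_le
    by (auto simp: U_def pairs_agreeing_outside_def A_def W_def avoiding_weight_def
        intro!: abs_prod_edge_factor_le[where J = J])
  then have "0 \<le> W u" if "u \<in> U" for u
    using that by (meson abs_ge_zero order_trans)
  then have "0 \<le> avg U (\<lambda>u. W u * (s u)\<^sup>2)"
    by (simp add: avg_nonneg)
  then show ?thesis
    using avg_weighted_Cauchy_Schwarz[of U A W s] A_le_W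
    unfolding W_def[symmetric] Q_K Q_insert W_avg by simp
qed

lemma avg_pseudorandom_weight:
  fixes \<nu> :: "'j set \<Rightarrow> ('j \<Rightarrow> 'v) \<Rightarrow> real"
  assumes "K \<subseteq> J"
  shows "avg (Vpts V J \<times> Vpts V J) (\<lambda>(x0, x1). \<Prod>e\<in>H. \<Prod>w\<in>cube e.
      if j \<notin> e \<and> (\<forall>i\<in>e - K. \<not> w i) then \<nu> e (cpt e x0 x1 w) else 1)
    = avg (pairs_agreeing_outside V J K) (\<lambda>(x0, x1). avoiding_weight H \<nu> K j x0 x1)"
proof -
  txt \<open>Vertices supported in \<open>K\<close> read \<open>x1\<close> only on \<open>K\<close>, so \<open>x1\<close> may be replaced by its merge
    with \<open>x0\<close> outside \<open>K\<close>, which turns the average over all pairs into one over agreeing pairs.\<close>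
  have "(\<Prod>e\<in>H. \<Prod>w\<in>cube e. if j \<notin> e \<and> (\<forall>i\<in>e - K. \<not> w i) then \<nu> e (cpt e x0 x1 w) else 1)
      = avoiding_weight H \<nu> K j x0 (\<lambda>i. if i \<in> K then x1 i else x0 i)" for x0 x1
  proof -
    have factor: "(\<Prod>w\<in>cube e. if \<forall>i\<in>e - K. \<not> w i then \<nu> e (cpt e x0 x1 w) else 1)
        = edge_factor \<nu> \<nu> K e x0 (\<lambda>i. if i \<in> K then x1 i else x0 i)" if "e \<in> H" for e
    proof -
      have "finite e"
        using edge_subset[OF that] finite_J by (rule finite_subset)
      moreover have "cpt e x0 x1 (restrict (\<lambda>i. i \<in> e \<inter> K \<and> w i) e)
          = cpt e x0 (\<lambda>i. if i \<in> K then x1 i else x0 i) w" for w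
        by (auto simp: cpt_def fun_eq_iff)
      ultimately show ?thesis
        using prod_cube_vanishing_outside[of "e \<inter> K" e "\<lambda>w. \<nu> e (cpt e x0 x1 w)"]
        by (simp add: edge_factor_def Diff_Int)
    qed
    have "(\<Prod>e\<in>H. \<Prod>w\<in>cube e. if j \<notin> e \<and> (\<forall>i\<in>e - K. \<not> w i) then \<nu> e (cpt e x0 x1 w) else 1)
        = (\<Prod>e\<in>H. if j \<notin> e then edge_factor \<nu> \<nu> K e x0 (\<lambda>i. if i \<in> K then x1 i else x0 i) else 1)"
      by (rule prod.cong) (simp_all add: factor)
    then show ?thesis
      by (simp add: avoiding_weight_def prod.inter_filter finite_H)
  qed
  then show ?thesis
    using avg_pairs_agreeing_outside_merge[where V = V and
        F = "\<lambda>(x0, x1). avoiding_weight H \<nu> K j x0 x1", OF assms finite_J finite_V V_nonempty]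
    by (simp add: split_def)
qed

end

lemma hypergraph_system_finite_hypergraph:
  "hypergraph_system J V d H \<Longrightarrow> finite_hypergraph J (V N) H"
  unfolding hypergraph_system_def finite_hypergraph_def by blast

lemma pseudorandom_avg_weight_tendsto_1:
  assumes "hypergraph_system J V d H" "pseudorandom J V H \<nu>" "K \<subseteq> J"
  shows "(\<lambda>N. avg (pairs_agreeing_outside (V N) J K)
      (\<lambda>(x0, x1). avoiding_weight H (\<nu> N) K j x0 x1)) \<longlonglongrightarrow> 1"
proof -
  have limit: "\<forall>n. (\<lambda>N. avg (Vpts (V N) J \<times> Vpts (V N) J) (\<lambda>(x0, x1). \<Prod>e\<in>H. \<Prod>w\<in>cube e.
      if n e w then \<nu> N e (cpt e x0 x1 w) else 1)) \<longlonglongrightarrow> 1"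
    using assms(2) unfolding pseudorandom_def by (elim conjE)
  have weight: "avg (Vpts (V N) J \<times> Vpts (V N) J) (\<lambda>(x0, x1). \<Prod>e\<in>H. \<Prod>w\<in>cube e.
      if j \<notin> e \<and> (\<forall>i\<in>e - K. \<not> w i) then \<nu> N e (cpt e x0 x1 w) else 1)
    = avg (pairs_agreeing_outside (V N) J K) (\<lambda>(x0, x1). avoiding_weight H (\<nu> N) K j x0 x1)"
    for N
    using hypergraph_system_finite_hypergraph[OF assms(1)] assms(3)
    by (rule finite_hypergraph.avg_pseudorandom_weight)
  show ?thesis
    using spec[OF limit, of "\<lambda>e w. j \<notin> e \<and> (\<forall>i\<in>e - K. \<not> w i)"] by (simp add: weight)
qed

theorem mainTheorem9:
  fixes J :: "'j set" and V :: "nat \<Rightarrow> 'j \<Rightarrow> 'v set" and d :: nat and H :: "'j set set"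
    and \<nu> :: "nat \<Rightarrow> 'j set \<Rightarrow> ('j \<Rightarrow> 'v) \<Rightarrow> real"
  assumes "hypergraph_system J V d H"
    and "pseudorandom J V H \<nu>"
  shows "\<forall>J' j0. J' \<subset> J \<and> j0 \<in> J - J' \<longrightarrow>
    (\<exists>\<epsilon> :: nat \<Rightarrow> real. \<epsilon> \<longlonglongrightarrow> 0 \<and>
      (\<forall>N. \<forall>f :: 'j set \<Rightarrow> ('j \<Rightarrow> 'v) \<Rightarrow> real.
         (\<forall>e\<in>H. \<forall>x\<in>Vpts (V N) e. \<bar>f e x\<bar> \<le> \<nu> N e x) \<longrightarrow>
         \<bar>Q J (V N) H (\<nu> N) f J'\<bar> \<le> (1 + \<epsilon> N) * sqrt \<bar>Q J (V N) H (\<nu> N) f (insert j0 J')\<bar>))"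
proof (intro allI impI)
  fix J' j0 assume J': "J' \<subset> J \<and> j0 \<in> J - J'"
  define G where
    "G N = avg (pairs_agreeing_outside (V N) J J') (\<lambda>(x0, x1). avoiding_weight H (\<nu> N) J' j0 x0 x1)"
    for N
  have "G \<longlonglongrightarrow> 1"
    unfolding G_def using J' by (intro pseudorandom_avg_weight_tendsto_1[OF assms]) auto
  then have "(\<lambda>N. sqrt (G N) - 1) \<longlonglongrightarrow> 0"
    by (auto intro!: tendsto_eq_intros)
  moreover have
    "\<bar>Q J (V N) H (\<nu> N) f J'\<bar> \<le> (1 + (sqrt (G N) - 1)) * sqrt \<bar>Q J (V N) H (\<nu> N) f (insert j0 J')\<bar>"
    if "\<forall>e\<in>H. \<forall>x\<in>Vpts (V N) e. \<bar>f e x\<bar> \<le> \<nu> N e x" for N f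
  proof -
    interpret finite_hypergraph J "V N" H
      using assms(1) by (rule hypergraph_system_finite_hypergraph)
    have "\<bar>Q J (V N) H (\<nu> N) f J'\<bar> \<le> sqrt (G N) * sqrt \<bar>Q J (V N) H (\<nu> N) f (insert j0 J')\<bar>"
      unfolding G_def by (rule abs_Q_le_sqrt_avg_weight) (use J' that in auto)
    then show ?thesis
      by simp
  qed
  ultimately show "\<exists>\<epsilon> :: nat \<Rightarrow> real. \<epsilon> \<longlonglongrightarrow> 0 \<and>
      (\<forall>N. \<forall>f :: 'j set \<Rightarrow> ('j \<Rightarrow> 'v) \<Rightarrow> real.
         (\<forall>e\<in>H. \<forall>x\<in>Vpts (V N) e. \<bar>f e x\<bar> \<le> \<nu> N e x) \<longrightarrow>
         \<bar>Q J (V N) H (\<nu> N) f J'\<bar> \<le> (1 + \<epsilon> N) * sqrt \<bar>Q J (V N) H (\<nu> N) f (insert j0 J')\<bar>)"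
    by blast
qed

end
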